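(* Let $R$ be a $\sigma$-(sps) Armendariz ring, where $\sigma$ is an endomorphism of $R$. Let $f=\sum_{i=0}^\infty a_ix^i$, $g=\sum_{j=0}^\infty b_jx^j$, $h=\sum_{k=0}^\infty c_kx^k\in R[[x;\sigma]]$. If $fgh=0$, then $a_ib_jc_k=0$ for all $i,j,k\ge 0$.
   Context: All rings are associative with identity; $\sigma$ denotes a nonzero, non-identity ring endomorphism of $R$. The skew power series ring $R[[x;\sigma]]$ consists of all formal series $\sum_{i=0}^\infty a_i x^i$ with $a_i\in R$, added termwise and multiplied using distributivity and the rule $xa=\sigma(a)x$ for $a\in R$. A ring $R$ is $\sigma$-(sps) Armendariz if whenever $p=\sum_{i=0}^\infty a_ix^i$ and $q=\sum_{j=0}^\infty b_jx^j$ in $R[[x;\sigma]]$ satisfy $pq=0$, then $a_ib_j=0$ for all $i,j$. *)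

theory Defs
  imports Main
begin

definition ring_endo :: "('a::ring_1 \<Rightarrow> 'a) \<Rightarrow> bool" where
  "ring_endo \<sigma> \<longleftrightarrow> (\<forall>a b. \<sigma> (a + b) = \<sigma> a + \<sigma> b) \<and>
                     (\<forall>a b. \<sigma> (a * b) = \<sigma> a * \<sigma> b) \<and> \<sigma> 1 = 1"

text \<open>Elements of the skew power series ring R[[x;sigma]] are represented by their
  coefficient sequences nat => R. Multiplication uses x a = sigma(a) x, so
  (a_i x^i)(b_j x^j) = a_i sigma^i(b_j) x^(i+j).\<close>
definition skew_mult :: "('a::ring_1 \<Rightarrow> 'a) \<Rightarrow> (nat \<Rightarrow> 'a) \<Rightarrow> (nat \<Rightarrow> 'a) \<Rightarrow> (nat \<Rightarrow> 'a)" where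
  "skew_mult \<sigma> p q = (\<lambda>n. \<Sum>i\<le>n. p i * (\<sigma> ^^ i) (q (n - i)))"

definition sps_armendariz :: "('a::ring_1 \<Rightarrow> 'a) \<Rightarrow> bool" where
  "sps_armendariz \<sigma> \<longleftrightarrow>
     (\<forall>p q. skew_mult \<sigma> p q = (\<lambda>_. 0) \<longrightarrow> (\<forall>i j. p i * q j = 0))"

end

theory Submission
  imports Defs
begin

(* Multiplication in the skew power series ring R[[x;sigma]] is
   associative, so fgh = 0 also reads f(gh) = 0.  The Armendariz property
   applied to the pair (f, gh) gives a_i (gh)_m = 0 for every coefficient m of
   gh.  Since left multiplication by the scalar a_i commutes with forming the
   coefficients of a product, this says (a_i g) h = 0, where a_i g is the
   series with coefficients a_i b_j.  A second application of the Armendariz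
   property to the pair (a_i g, h) yields a_i b_j c_k = 0. *)

lemma ring_endo_zero:
  assumes "ring_endo \<tau>"
  shows "\<tau> 0 = 0"
proof -
  have "\<tau> 0 = \<tau> (0 + 0)" by simp
  also have "\<dots> = \<tau> 0 + \<tau> 0" using assms by (simp only: ring_endo_def)
  finally show ?thesis by simp
qed

lemma ring_endo_sum:
  assumes "ring_endo \<tau>"
  shows "\<tau> (\<Sum>i\<in>A. F i) = (\<Sum>i\<in>A. \<tau> (F i))"
proof (induction A rule: infinite_finite_induct)
  case (insert x A)
  then show ?case using assms by (simp add: ring_endo_def)
qed (simp_all add: ring_endo_zero[OF assms])

lemma ring_endo_funpow:
  assumes "ring_endo \<sigma>"
  shows "ring_endo (\<sigma> ^^ k)"
  by (induction k) (use assms in \<open>simp_all add: ring_endo_def\<close>)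

lemma triangle_sum_reindex:
  fixes G :: "nat \<Rightarrow> nat \<Rightarrow> nat \<Rightarrow> 'a::comm_monoid_add"
  shows "(\<Sum>m\<le>n. \<Sum>i\<le>m. G i (m - i) (n - m)) = (\<Sum>i\<le>n. \<Sum>j\<le>n - i. G i j (n - i - j))"
proof -
  have "(\<Sum>m\<le>n. \<Sum>i\<le>m. G i (m - i) (n - m))
      = (\<Sum>(m, i)\<in>Sigma {..n} (\<lambda>m. {..m}). G i (m - i) (n - m))"
    by (simp add: sum.Sigma)
  also have "\<dots> = (\<Sum>(i, j)\<in>Sigma {..n} (\<lambda>i. {..n - i}). G i j (n - i - j))"
    by (rule sum.reindex_bij_witness[where i="\<lambda>(i, j). (i + j, i)" and j="\<lambda>(m, i). (i, m - i)"])
       auto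
  also have "\<dots> = (\<Sum>i\<le>n. \<Sum>j\<le>n - i. G i j (n - i - j))"
    by (simp add: sum.Sigma)
  finally show ?thesis .
qed

text \<open>The skew power series ring is associative: both sides have \<open>n\<close>-th
  coefficient \<open>\<Sum> a_i \<sigma>^i(b_j) \<sigma>^(i+j)(c_k)\<close> over \<open>i + j + k = n\<close>.\<close>
lemma skew_mult_assoc:
  assumes "ring_endo \<sigma>"
  shows "skew_mult \<sigma> (skew_mult \<sigma> f g) h = skew_mult \<sigma> f (skew_mult \<sigma> g h)"
proof
  fix n
  let ?T = "\<lambda>i j k. f i * (\<sigma> ^^ i) (g j) * (\<sigma> ^^ (i + j)) (h k)"
  have left: "skew_mult \<sigma> (skew_mult \<sigma> f g) h n = (\<Sum>m\<le>n. \<Sum>i\<le>m. ?T i (m - i) (n - m))"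
    by (simp add: skew_mult_def sum_distrib_right)
  have twist: "(\<sigma> ^^ i) (g j * (\<sigma> ^^ j) c) = (\<sigma> ^^ i) (g j) * (\<sigma> ^^ (i + j)) c" for i j c
    using ring_endo_funpow[OF assms, of i] by (simp add: ring_endo_def funpow_add)
  have right: "skew_mult \<sigma> f (skew_mult \<sigma> g h) n = (\<Sum>i\<le>n. \<Sum>j\<le>n - i. ?T i j (n - i - j))"
    by (simp add: skew_mult_def sum_distrib_left ring_endo_sum[OF ring_endo_funpow[OF assms]]
                  twist mult.assoc)
  show "skew_mult \<sigma> (skew_mult \<sigma> f g) h n = skew_mult \<sigma> f (skew_mult \<sigma> g h) n"
    unfolding left right by (rule triangle_sum_reindex[of ?T n])
qed

lemma scalar_skew_mult:
  "c * skew_mult \<sigma> p q n = skew_mult \<sigma> (\<lambda>j. c * p j) q n"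
  by (simp add: skew_mult_def sum_distrib_left mult.assoc)

theorem lemma2p4:
  fixes \<sigma> :: "'a::ring_1 \<Rightarrow> 'a" and f g h :: "nat \<Rightarrow> 'a"
  assumes "ring_endo \<sigma>" and "\<sigma> \<noteq> (\<lambda>_. 0)" and "\<sigma> \<noteq> id"
    and "sps_armendariz \<sigma>"
    and "skew_mult \<sigma> (skew_mult \<sigma> f g) h = (\<lambda>_. 0)"
  shows "\<forall>i j k. f i * g j * h k = 0"
proof (intro allI)
  fix i j k
  have "skew_mult \<sigma> f (skew_mult \<sigma> g h) = (\<lambda>_. 0)"
    using assms(5) skew_mult_assoc[OF assms(1)] by simp
  then have "f i * skew_mult \<sigma> g h m = 0" for m
    using assms(4) unfolding sps_armendariz_def by blast
  then have "skew_mult \<sigma> (\<lambda>j. f i * g j) h = (\<lambda>_. 0)"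
    by (simp add: fun_eq_iff flip: scalar_skew_mult)
  then show "f i * g j * h k = 0"
    using assms(4) unfolding sps_armendariz_def by blast
qed

end
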